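(* Let $f:\mathbb{R}^n\to\mathbb{R}_{>0}$ be a twice continuously differentiable convex function that is $\gamma$-second order robust and $\mu$-multiplicatively smooth with respect to the $\ell_2$ norm, for some $\gamma,\mu>0$. Let $\mathbf{x},\mathbf{x}^*\in\mathbb{R}^n$ and $R>0$ with $\|\mathbf{x}-\mathbf{x}^*\|_2\le R$. Let $\mathbf{x}'=\mathbf{x}-\eta\nabla f(\mathbf{x})$ with $\eta=\min\bigl\{\frac1{2\mu f(\mathbf{x})},\frac1{\gamma\|\nabla f(\mathbf{x})\|_2}\bigr\}$. If $f(\mathbf{x})>f(\mathbf{x}^* )$, then $$f(\mathbf{x})-f(\mathbf{x}')\ge\min\Bigl\{\frac{(f(\mathbf{x})-f(\mathbf{x}^* ))^2}{4\mu f(\mathbf{x})R^2},\frac{f(\mathbf{x})-f(\mathbf{x}^* )}{2\gamma R}\Bigr\},$$ and if moreover $f(\mathbf{x}')>f(\mathbf{x}^* )$ then $\|\mathbf{x}'-\mathbf{x}^*\|_2\le\|\mathbf{x}-\mathbf{x}^*\|_2$. If $f(\mathbf{x})\le f(\mathbf{x}^* )$, then $f(\mathbf{x}')\le f(\mathbf{x})$.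
   Context: $f$ is $q$-second order robust w.r.t. a norm $\|\cdot\|$ if $\|\mathbf{x}'-\mathbf{x}\|\le1/q$ implies $\tfrac12\nabla^2f(\mathbf{x})\preceq\nabla^2f(\mathbf{x}')\preceq2\nabla^2f(\mathbf{x})$; $f>0$ is $\mu$-multiplicatively smooth w.r.t. $\|\cdot\|$ if $\tilde{\mathbf{x}}^\top\nabla^2f(\mathbf{x})\tilde{\mathbf{x}}\le\mu f(\mathbf{x})\|\tilde{\mathbf{x}}\|^2$ for all $\mathbf{x},\tilde{\mathbf{x}}$. If $\nabla f(\mathbf{x})=\mathbf{0}$ the second term in the step size is read as $+\infty$. *)

theory Defs
  imports "HOL-Analysis.Analysis"
begin

definition loewner_le :: "real^'n^'n \<Rightarrow> real^'n^'n \<Rightarrow> bool" where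
  "loewner_le A B \<longleftrightarrow> (\<forall>v. v \<bullet> (A *v v) \<le> v \<bullet> (B *v v))"

definition second_order_robust :: "real \<Rightarrow> (real^'n \<Rightarrow> real^'n^'n) \<Rightarrow> bool" where
  "second_order_robust q Hess \<longleftrightarrow>
     (\<forall>x x'. norm (x' - x) \<le> 1 / q \<longrightarrow>
        loewner_le ((1/2) *\<^sub>R Hess x) (Hess x') \<and> loewner_le (Hess x') (2 *\<^sub>R Hess x))"

definition mult_smooth :: "real \<Rightarrow> (real^'n \<Rightarrow> real) \<Rightarrow> (real^'n \<Rightarrow> real^'n^'n) \<Rightarrow> bool" where
  "mult_smooth \<mu> f Hess \<longleftrightarrow>
     (\<forall>x v. v \<bullet> (Hess x *v v) \<le> \<mu> * f x * (norm v)\<^sup>2)"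

text \<open>Step size; when the gradient vanishes the second term is +infinity.\<close>
definition step_size :: "real \<Rightarrow> real \<Rightarrow> real \<Rightarrow> real^'n \<Rightarrow> real" where
  "step_size \<gamma> \<mu> fx g =
     (if g = 0 then 1 / (2 * \<mu> * fx) else min (1 / (2 * \<mu> * fx)) (1 / (\<gamma> * norm g)))"

end

theory Submission
  imports Defs
begin

text \<open>Along the negative gradient the step is short enough (at most 1/\<gamma>) for robustness to
  compare the Hessian with the one at x, where multiplicative smoothness bounds it by \<mu> f(x);
  a second order Taylor bound then gives f(x') \<le> f(x) - \<eta> |\<nabla>f(x)|^2 / 2.
  Convexity gives \<nabla>f(x) \<bullet> (x - x*) \<ge> f(x) - f(x*), hence |\<nabla>f(x)| \<ge> (f(x) - f(x*)) / R, and the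
  two possible values of \<eta> yield the two terms of the minimum. If f(x') > f(x*), the decrease is
  less than f(x) - f(x*) \<le> \<nabla>f(x) \<bullet> (x - x*), which is exactly what makes the step move
  towards x*.\<close>

lemma convex_on_along_line:
  fixes f :: "'a::real_vector \<Rightarrow> real"
  assumes "convex_on UNIV f"
  shows "convex_on UNIV (\<lambda>t. f (x + t *\<^sub>R v))"
proof (rule convex_onI)
  fix t a b :: real
  assume "t > 0" "t < 1"
  have "x + ((1 - t) *\<^sub>R a + t *\<^sub>R b) *\<^sub>R v = (1 - t) *\<^sub>R (x + a *\<^sub>R v) + t *\<^sub>R (x + b *\<^sub>R v)"
    by (simp add: algebra_simps)
  then show "f (x + ((1 - t) *\<^sub>R a + t *\<^sub>R b) *\<^sub>R v) \<le> (1 - t) * f (x + a *\<^sub>R v) + t * f (x + b *\<^sub>R v)"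
    using convex_onD[OF assms, of t] \<open>t > 0\<close> \<open>t < 1\<close> by simp
qed simp

lemma convex_on_above_tangent:
  fixes f :: "'a::real_normed_vector \<Rightarrow> real"
  assumes cvx: "convex_on UNIV f" and deriv: "(f has_derivative f') (at x)"
  shows "f x + f' (y - x) \<le> f y"
proof -
  define h where "h t = f (x + t *\<^sub>R (y - x))" for t
  have "((\<lambda>t. x + t *\<^sub>R (y - x)) has_derivative (\<lambda>t. t *\<^sub>R (y - x))) (at 0)"
    by (auto intro!: derivative_eq_intros)
  moreover have "(f has_derivative f') (at (x + 0 *\<^sub>R (y - x)))"
    using deriv by simp
  ultimately have "(h has_derivative (\<lambda>t. f' (t *\<^sub>R (y - x)))) (at 0)"
    unfolding h_def by (rule has_derivative_compose)
  moreover have "(\<lambda>t. f' (t *\<^sub>R (y - x))) = (*) (f' (y - x))"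
    using has_derivative_linear[OF deriv] by (auto simp: fun_eq_iff linear_cmul)
  ultimately have "(h has_field_derivative f' (y - x)) (at 0)"
    by (simp add: has_field_derivative_def)
  moreover have "convex_on UNIV h"
    unfolding h_def by (rule convex_on_along_line[OF cvx])
  ultimately have "f' (y - x) * (1 - 0) \<le> h 1 - h 0"
    using convex_on_imp_above_tangent[OF _ connected_UNIV, of h 0 1] by simp
  then show ?thesis
    by (simp add: h_def)
qed

lemma second_order_upper_bound:
  fixes \<phi> \<phi>' \<phi>'' :: "real \<Rightarrow> real"
  assumes d1: "\<And>t. (\<phi> has_real_derivative \<phi>' t) (at t)"
    and d2: "\<And>t. (\<phi>' has_real_derivative \<phi>'' t) (at t)"
    and bound: "\<And>t. 0 \<le> t \<Longrightarrow> t \<le> T \<Longrightarrow> \<phi>'' t \<le> M" and "T \<ge> 0"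
  shows "\<phi> T \<le> \<phi> 0 + \<phi>' 0 * T + M * T\<^sup>2 / 2"
proof -
  have slope_bound: "\<phi>' t \<le> \<phi>' 0 + M * t" if "0 \<le> t" "t \<le> T" for t
  proof -
    have "\<phi>' t - M * t \<le> \<phi>' 0 - M * 0"
    proof (rule DERIV_nonpos_imp_nonincreasing[OF \<open>0 \<le> t\<close>])
      fix s assume "0 \<le> s" "s \<le> t"
      then show "\<exists>y. ((\<lambda>t. \<phi>' t - M * t) has_real_derivative y) (at s) \<and> y \<le> 0"
        using bound[of s] that
        by (intro exI[of _ "\<phi>'' s - M * 1"]) (auto intro!: derivative_eq_intros d2)
    qed
    then show ?thesis
      by simp
  qed
  have "\<phi> T - \<phi>' 0 * T - M * T\<^sup>2 / 2 \<le> \<phi> 0 - \<phi>' 0 * 0 - M * 0\<^sup>2 / 2"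
  proof (rule DERIV_nonpos_imp_nonincreasing[OF \<open>T \<ge> 0\<close>])
    fix s assume "0 \<le> s" "s \<le> T"
    then show "\<exists>y. ((\<lambda>t. \<phi> t - \<phi>' 0 * t - M * t\<^sup>2 / 2) has_real_derivative y) (at s) \<and> y \<le> 0"
      using slope_bound[of s]
      by (intro exI[of _ "\<phi>' s - \<phi>' 0 * 1 - M * (2 * s) / 2"])
         (auto intro!: derivative_eq_intros d1 simp: power2_eq_square)
  qed
  then show ?thesis
    by simp
qed

lemma taylor_upper_bound_along_line:
  fixes f :: "real^'n \<Rightarrow> real" and grad :: "real^'n \<Rightarrow> real^'n"
    and Hess :: "real^'n \<Rightarrow> real^'n^'n"
  assumes grad: "\<forall>y. (f has_derivative (\<lambda>w. grad y \<bullet> w)) (at y)"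
    and hess: "\<forall>y. (grad has_derivative (\<lambda>w. Hess y *v w)) (at y)"
    and bound: "\<And>t. 0 \<le> t \<Longrightarrow> t \<le> T \<Longrightarrow> v \<bullet> (Hess (x + t *\<^sub>R v) *v v) \<le> M"
    and "T \<ge> 0"
  shows "f (x + T *\<^sub>R v) \<le> f x + T * (grad x \<bullet> v) + M * T\<^sup>2 / 2"
proof -
  define p where "p t = x + t *\<^sub>R v" for t
  have line: "(p has_derivative (\<lambda>s. s *\<^sub>R v)) (at t)" for t
    unfolding p_def by (auto intro!: derivative_eq_intros)
  have d1: "((\<lambda>t. f (p t)) has_real_derivative grad (p t) \<bullet> v) (at t)" for t
    using has_derivative_compose[OF line grad[rule_format, of "p t"]]
    by (simp add: has_field_derivative_def mult_commute_abs)
  have d2: "((\<lambda>t. grad (p t) \<bullet> v) has_real_derivative v \<bullet> (Hess (p t) *v v)) (at t)" for t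
    using bounded_linear.has_derivative[OF bounded_linear_inner_left[of v]
        has_derivative_compose[OF line hess[rule_format, of "p t"]]]
    by (simp add: has_field_derivative_def matrix_vector_mult_scaleR inner_commute mult_commute_abs)
  show ?thesis
    using second_order_upper_bound[OF d1 d2, of T M] bound \<open>T \<ge> 0\<close>
    by (simp add: p_def mult.commute)
qed

lemma robust_smooth_hessian_bound:
  assumes robust: "second_order_robust \<gamma> Hess" and smooth: "mult_smooth \<mu> f Hess"
    and near: "norm (y - x) \<le> 1 / \<gamma>"
  shows "v \<bullet> (Hess y *v v) \<le> 2 * \<mu> * f x * (norm v)\<^sup>2"
proof -
  have "loewner_le (Hess y) (2 *\<^sub>R Hess x)"
    using robust near unfolding second_order_robust_def by blast
  then have "v \<bullet> (Hess y *v v) \<le> v \<bullet> ((2 *\<^sub>R Hess x) *v v)"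
    unfolding loewner_le_def by blast
  also have "\<dots> = 2 * (v \<bullet> (Hess x *v v))"
    by (simp flip: scaleR_matrix_vector_assoc)
  also have "\<dots> \<le> 2 * (\<mu> * f x * (norm v)\<^sup>2)"
    using smooth unfolding mult_smooth_def by simp
  finally show ?thesis
    by simp
qed

lemma step_size_pos:
  assumes "\<gamma> > 0" "\<mu> > 0" "fx > 0"
  shows "step_size \<gamma> \<mu> fx g > 0"
  using assms by (simp add: step_size_def)

lemma step_size_le: "step_size \<gamma> \<mu> fx g \<le> 1 / (2 * \<mu> * fx)"
  by (simp add: step_size_def)

lemma step_size_mult_norm_le:
  assumes "\<gamma> > 0"
  shows "step_size \<gamma> \<mu> fx g * norm g \<le> 1 / \<gamma>"
proof (cases "g = 0")
  case False
  then have "step_size \<gamma> \<mu> fx g \<le> 1 / (\<gamma> * norm g)"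
    by (simp add: step_size_def)
  with False assms show ?thesis
    by (simp add: field_simps)
qed (use assms in simp)

lemma gradient_step_decrease:
  fixes f :: "real^'n \<Rightarrow> real" and grad :: "real^'n \<Rightarrow> real^'n"
    and Hess :: "real^'n \<Rightarrow> real^'n^'n"
  assumes grad: "\<forall>y. (f has_derivative (\<lambda>v. grad y \<bullet> v)) (at y)"
    and hess: "\<forall>y. (grad has_derivative (\<lambda>v. Hess y *v v)) (at y)"
    and robust: "second_order_robust \<gamma> Hess" and smooth: "mult_smooth \<mu> f Hess"
    and "\<gamma> > 0" "\<mu> > 0" "f x > 0"
  defines "\<eta> \<equiv> step_size \<gamma> \<mu> (f x) (grad x)"
  shows "\<eta> * (norm (grad x))\<^sup>2 / 2 \<le> f x - f (x - \<eta> *\<^sub>R grad x)"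
proof -
  define g where "g = grad x"
  have "\<eta> > 0"
    using step_size_pos assms by (simp add: \<eta>_def)
  have "- g \<bullet> (Hess (x + t *\<^sub>R - g) *v - g) \<le> 2 * \<mu> * f x * (norm g)\<^sup>2"
    if "0 \<le> t" "t \<le> \<eta>" for t
  proof -
    have "norm ((x + t *\<^sub>R - g) - x) = t * norm g"
      using that by simp
    also have "\<dots> \<le> \<eta> * norm g"
      using that by (simp add: mult_right_mono)
    also have "\<dots> \<le> 1 / \<gamma>"
      using step_size_mult_norm_le \<open>\<gamma> > 0\<close> by (simp add: \<eta>_def g_def)
    finally show ?thesis
      using robust_smooth_hessian_bound[OF robust smooth, of _ x "- g"] by (simp only: norm_minus_cancel)
  qed
  from taylor_upper_bound_along_line[OF grad hess this, of \<eta>] \<open>\<eta> > 0\<close>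
  have "f (x - \<eta> *\<^sub>R g) \<le> f x - \<eta> * (norm g)\<^sup>2 + \<eta> * (\<mu> * f x * \<eta>) * (norm g)\<^sup>2"
    by (simp add: g_def dot_square_norm power2_eq_square algebra_simps)
  moreover have "\<mu> * f x * \<eta> \<le> 1 / 2"
    using step_size_le[of \<gamma> \<mu> "f x" g] assms by (simp add: \<eta>_def g_def field_simps)
  then have "\<eta> * (\<mu> * f x * \<eta>) * (norm g)\<^sup>2 \<le> \<eta> * (1 / 2) * (norm g)\<^sup>2"
    using \<open>\<eta> > 0\<close> by (intro mult_right_mono mult_left_mono) auto
  ultimately show ?thesis
    by (simp add: g_def)
qed

lemma step_size_times_norm_squared:
  assumes "\<gamma> > 0" "\<mu> > 0" "fx > 0" "g \<noteq> 0"
  shows "step_size \<gamma> \<mu> fx g * (norm g)\<^sup>2 / 2 = min ((norm g)\<^sup>2 / (4 * \<mu> * fx)) (norm g / (2 * \<gamma>))"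
proof -
  have "step_size \<gamma> \<mu> fx g * ((norm g)\<^sup>2 / 2)
      = min (1 / (2 * \<mu> * fx) * ((norm g)\<^sup>2 / 2)) (1 / (\<gamma> * norm g) * ((norm g)\<^sup>2 / 2))"
    using assms by (simp add: step_size_def min_mult_distrib_right)
  then show ?thesis
    using assms by (simp add: power2_eq_square)
qed

lemma step_size_decrease_lower_bound:
  assumes "\<gamma> > 0" "\<mu> > 0" "fx > 0" "R > 0" and "\<Delta> > 0" and gap: "\<Delta> \<le> norm g * R"
  shows "min (\<Delta>\<^sup>2 / (4 * \<mu> * fx * R\<^sup>2)) (\<Delta> / (2 * \<gamma> * R))
           \<le> step_size \<gamma> \<mu> fx g * (norm g)\<^sup>2 / 2"
proof -
  have norm_ge: "\<Delta> / R \<le> norm g"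
    using gap \<open>R > 0\<close> by (simp add: field_simps)
  then have "g \<noteq> 0"
    using assms by auto
  have "\<Delta>\<^sup>2 / (4 * \<mu> * fx * R\<^sup>2) = (\<Delta> / R)\<^sup>2 / (4 * \<mu> * fx)"
    by (simp add: power_divide mult_ac)
  also have "\<dots> \<le> (norm g)\<^sup>2 / (4 * \<mu> * fx)"
    using norm_ge assms by (intro divide_right_mono power_mono) auto
  finally have first: "\<Delta>\<^sup>2 / (4 * \<mu> * fx * R\<^sup>2) \<le> (norm g)\<^sup>2 / (4 * \<mu> * fx)" .
  have "\<Delta> / (2 * \<gamma> * R) = \<Delta> / R / (2 * \<gamma>)"
    by (simp add: mult_ac)
  also have "\<dots> \<le> norm g / (2 * \<gamma>)"
    using norm_ge assms by (intro divide_right_mono) auto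
  finally show ?thesis
    using first step_size_times_norm_squared[OF assms(1-3) \<open>g \<noteq> 0\<close>] by linarith
qed

lemma norm_step_towards_le:
  fixes g z :: "'a::real_inner"
  assumes "\<eta> \<ge> 0" and "\<eta> * (norm g)\<^sup>2 \<le> 2 * (g \<bullet> z)"
  shows "norm (z - \<eta> *\<^sub>R g) \<le> norm z"
proof (rule power2_le_imp_le)
  have "(norm (z - \<eta> *\<^sub>R g))\<^sup>2 = (norm z)\<^sup>2 - \<eta> * (2 * (g \<bullet> z) - \<eta> * (norm g)\<^sup>2)"
    unfolding power2_norm_eq_inner
    by (simp add: inner_diff_left inner_diff_right inner_commute algebra_simps)
  with assms show "(norm (z - \<eta> *\<^sub>R g))\<^sup>2 \<le> (norm z)\<^sup>2"
    by (simp add: mult_nonneg_nonneg)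
qed simp

theorem lemma8:
  fixes f :: "real^'n \<Rightarrow> real" and grad :: "real^'n \<Rightarrow> real^'n"
    and Hess :: "real^'n \<Rightarrow> real^'n^'n"
    and \<gamma> \<mu> R :: real and x xs :: "real^'n"
  assumes pos: "\<forall>y. f y > 0"
    and grad: "\<forall>y. (f has_derivative (\<lambda>v. grad y \<bullet> v)) (at y)"
    and hess: "\<forall>y. (grad has_derivative (\<lambda>v. Hess y *v v)) (at y)"
    and hess_cont: "continuous_on UNIV Hess"
    and cvx: "convex_on UNIV f"
    and gamma_pos: "\<gamma> > 0" and mu_pos: "\<mu> > 0"
    and robust: "second_order_robust \<gamma> Hess"
    and smooth: "mult_smooth \<mu> f Hess"
    and R_pos: "R > 0" and dist: "norm (x - xs) \<le> R"
  defines "x' \<equiv> x - step_size \<gamma> \<mu> (f x) (grad x) *\<^sub>R grad x"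
  shows "(f x > f xs \<longrightarrow>
            f x - f x' \<ge> min ((f x - f xs)\<^sup>2 / (4 * \<mu> * f x * R\<^sup>2))
                              ((f x - f xs) / (2 * \<gamma> * R))
          \<and> (f x' > f xs \<longrightarrow> norm (x' - xs) \<le> norm (x - xs)))
       \<and> (f x \<le> f xs \<longrightarrow> f x' \<le> f x)"
proof -
  define \<eta> where "\<eta> = step_size \<gamma> \<mu> (f x) (grad x)"
  have "\<eta> > 0"
    unfolding \<eta>_def using step_size_pos gamma_pos mu_pos pos by blast
  have decrease: "\<eta> * (norm (grad x))\<^sup>2 / 2 \<le> f x - f x'"
    unfolding x'_def \<eta>_def
    by (rule gradient_step_decrease[OF grad hess robust smooth gamma_pos mu_pos pos[rule_format]])
  have "0 \<le> \<eta> * (norm (grad x))\<^sup>2 / 2"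
    using \<open>\<eta> > 0\<close> by simp
  have gap: "f x - f xs \<le> grad x \<bullet> (x - xs)"
    using convex_on_above_tangent[OF cvx grad[rule_format, of x], of xs]
    by (simp add: inner_diff_right)
  also have "\<dots> \<le> norm (grad x) * R"
    using norm_cauchy_schwarz[of "grad x" "x - xs"] dist
    by (meson mult_left_mono norm_ge_zero order_trans)
  finally have gap_norm: "f x - f xs \<le> norm (grad x) * R" .
  have "min ((f x - f xs)\<^sup>2 / (4 * \<mu> * f x * R\<^sup>2)) ((f x - f xs) / (2 * \<gamma> * R)) \<le> f x - f x'"
    if "f x > f xs"
    using that order_trans[OF step_size_decrease_lower_bound[OF gamma_pos mu_pos pos[rule_format] R_pos
          _ gap_norm] decrease[unfolded \<eta>_def]]
    by simp
  moreover have "norm (x' - xs) \<le> norm (x - xs)" if "f x' > f xs"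
    using norm_step_towards_le[of \<eta> "grad x" "x - xs"] \<open>\<eta> > 0\<close> decrease gap that
    by (simp add: x'_def \<eta>_def algebra_simps)
  moreover have "f x' \<le> f x"
    using decrease \<open>0 \<le> \<eta> * (norm (grad x))\<^sup>2 / 2\<close> by linarith
  ultimately show ?thesis
    by auto
qed

end
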